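(* Let $m\ge1$, $s_1,\dots,s_m\in\mathbb{R}$ and $\alpha\in[0,1]$. For $\gamma\in[0,1]$ let $N(\gamma):=\sum_{i=1}^m\chi_{\alpha,\gamma}(s_i)$. Then $$\int_0^1\big(N(\gamma)-\gamma m\big)^2\,d\gamma\ \ge\ \frac1{12}.$$
   Context: For $r\in\mathbb{R}$, $\{r\}:=r-\lfloor r\rfloor$. For $\alpha\in\mathbb{R}$, $\gamma\in[0,1]$, $S_{\alpha,\alpha+\gamma}:=\{x\in[0,1]:\{x-\alpha\}\le\gamma\}$, and $\chi_{\alpha,\gamma}(x):=1$ if $\{x\}\in S_{\alpha,\alpha+\gamma}$, and $0$ otherwise. *)

theory Defs
  imports "HOL-Analysis.Analysis"
begin

definition S_set :: "real \<Rightarrow> real \<Rightarrow> real set" where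
  "S_set \<alpha> \<gamma> = {x \<in> {0..1}. frac (x - \<alpha>) \<le> \<gamma>}"

definition chi :: "real \<Rightarrow> real \<Rightarrow> real \<Rightarrow> real" where
  "chi \<alpha> \<gamma> x = (if frac x \<in> S_set \<alpha> \<gamma> then 1 else 0)"

definition Ncount :: "nat \<Rightarrow> (nat \<Rightarrow> real) \<Rightarrow> real \<Rightarrow> real \<Rightarrow> real" where
  "Ncount m s \<alpha> \<gamma> = (\<Sum>i=1..m. chi \<alpha> \<gamma> (s i))"

end

theory Submission
  imports Defs
begin

text \<open>Since \<open>N(\<gamma>)\<close> is an integer, \<open>(N(\<gamma>) - \<gamma> m)\<^sup>2\<close> is at least the squared distance from
  \<open>\<gamma> m\<close> to the nearest integer. On each interval \<open>[j/m, (j+1)/m]\<close> this distance is a tent of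
  height \<open>1/2\<close>, whose square integrates to \<open>1/(12 m)\<close>; the \<open>m\<close> intervals give \<open>1/12\<close>.
  Monotonicity of \<open>N\<close> is needed only for integrability.\<close>

lemma chi_mono: "\<gamma> \<le> \<delta> \<Longrightarrow> chi \<alpha> \<gamma> x \<le> chi \<alpha> \<delta> x"
  by (auto simp: chi_def S_set_def)

lemma mono_Ncount: "mono (Ncount m s \<alpha>)"
  unfolding Ncount_def by (intro monoI sum_mono chi_mono)

lemma Ncount_nonneg: "0 \<le> Ncount m s \<alpha> \<gamma>"
  unfolding Ncount_def by (intro sum_nonneg) (auto simp: chi_def)

lemma Ncount_Ints: "Ncount m s \<alpha> \<gamma> \<in> \<int>"
  unfolding Ncount_def by (intro Ints_sum) (auto simp: chi_def)

lemma sq_dist_Ints_lower: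
  fixes n k x :: real
  assumes "n \<in> \<int>" "k \<in> \<int>" "k \<le> x" "x \<le> k + 1/2"
  shows "(x - k)\<^sup>2 \<le> (n - x)\<^sup>2"
proof -
  have "n \<le> k \<or> k + 1 \<le> n"
    using assms(1,2) by (elim Ints_cases) auto
  then have "\<bar>x - k\<bar> \<le> \<bar>n - x\<bar>"
    using assms(3,4) by auto
  then show ?thesis
    by (simp add: abs_le_square_iff)
qed

lemma sq_dist_Ints_lower':
  fixes n k x :: real
  assumes "n \<in> \<int>" "k \<in> \<int>" "k + 1/2 \<le> x" "x \<le> k + 1"
  shows "(x - (k + 1))\<^sup>2 \<le> (n - x)\<^sup>2"
proof -
  have "(- x - - (k + 1))\<^sup>2 \<le> (- n - - x)\<^sup>2"
    using assms by (intro sq_dist_Ints_lower) auto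
  then show ?thesis
    by (simp add: power2_eq_square algebra_simps)
qed

lemma has_integral_affine_square:
  fixes c d a b :: real
  assumes "0 < c" "a \<le> b"
  shows "((\<lambda>x. (c * x - d)\<^sup>2) has_integral ((c * b - d) ^ 3 - (c * a - d) ^ 3) / (3 * c)) {a..b}"
proof -
  have "((\<lambda>x. (c * x - d)\<^sup>2) has_integral
         (\<lambda>x. (c * x - d) ^ 3 / (3 * c)) b - (\<lambda>x. (c * x - d) ^ 3 / (3 * c)) a) {a..b}"
    by (intro fundamental_theorem_of_calculus assms(2))
       (use assms(1) in \<open>auto intro!: derivative_eq_intros
          simp: has_real_derivative_iff_has_vector_derivative[symmetric] power2_eq_square\<close>)
  then show ?thesis
    by (simp add: diff_divide_distrib)
qed

lemma integrable_square_deviation: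
  fixes f :: "real \<Rightarrow> real"
  assumes "mono f" "\<And>\<gamma>. 0 \<le> f \<gamma>" "0 \<le> a"
  shows "(\<lambda>\<gamma>. (f \<gamma> - \<gamma> * c)\<^sup>2) integrable_on {a..b}"
proof -
  have expand: "(\<lambda>\<gamma>. (f \<gamma> - \<gamma> * c)\<^sup>2)
      = (\<lambda>\<gamma>. (f \<gamma>)\<^sup>2 - 2 * c * (\<gamma> * f \<gamma>) + c\<^sup>2 * \<gamma>\<^sup>2)"
    by (auto simp: power2_eq_square algebra_simps)
  have "mono_on {a..b} (\<lambda>\<gamma>. (f \<gamma>)\<^sup>2)"
    using assms(1,2) by (auto simp: mono_on_def monoD intro!: power_mono)
  then have "(\<lambda>\<gamma>. (f \<gamma>)\<^sup>2) integrable_on {a..b}"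
    by (rule integrable_on_mono_on)
  moreover have "mono_on {a..b} (\<lambda>\<gamma>. \<gamma> * f \<gamma>)"
    using assms by (auto simp: mono_on_def monoD intro!: mult_mono)
  then have "(\<lambda>\<gamma>. 2 * c * (\<gamma> * f \<gamma>)) integrable_on {a..b}"
    using integrable_on_cmult_left[OF integrable_on_mono_on, of _ _ _ "2 * c"] by simp
  moreover have "(\<lambda>\<gamma>. c\<^sup>2 * \<gamma>\<^sup>2) integrable_on {a..b}"
    by (intro integrable_continuous_interval continuous_intros)
  ultimately show ?thesis
    unfolding expand by (intro integrable_add integrable_diff)
qed

lemma integral_square_deviation_cell:
  fixes f :: "real \<Rightarrow> real" and m j :: nat
  assumes "mono f" "\<And>\<gamma>. 0 \<le> f \<gamma>" "\<And>\<gamma>. f \<gamma> \<in> \<int>" "0 < m"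
  defines "g \<equiv> \<lambda>\<gamma>. (f \<gamma> - \<gamma> * real m)\<^sup>2"
  shows "1 / (12 * m) \<le> integral {j / m .. (j + 1) / m} g"
proof -
  let ?a = "real j / m" and ?c = "(j + 1/2) / m" and ?b = "(real j + 1) / m"
  have m: "0 < real m" using assms(4) by simp
  have ac: "?a \<le> ?c" and cb: "?c \<le> ?b"
    using m by (simp_all add: divide_right_mono)
  have g_int: "g integrable_on {x..y}" if "0 \<le> x" for x y
    unfolding g_def using assms(1,2) that by (rule integrable_square_deviation)
  have left: "1 / (24 * m) \<le> integral {?a..?c} g"
  proof (rule has_integral_le[OF _ integrable_integral])
    show "((\<lambda>\<gamma>. (m * \<gamma> - j)\<^sup>2) has_integral 1 / (24 * m)) {?a..?c}"
      using has_integral_affine_square[OF m ac, of j] m by (simp add: field_simps power3_eq_cube)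
    show "g integrable_on {?a..?c}" by (rule g_int) simp
    fix x assume "x \<in> {?a..?c}"
    then have "j \<le> x * m" "x * m \<le> j + 1/2" using m by (auto simp: field_simps)
    then show "(m * x - j)\<^sup>2 \<le> g x"
      using sq_dist_Ints_lower[OF assms(3) Ints_of_nat] by (simp add: g_def mult.commute)
  qed
  have right: "1 / (24 * m) \<le> integral {?c..?b} g"
  proof (rule has_integral_le[OF _ integrable_integral])
    show "((\<lambda>\<gamma>. (m * \<gamma> - (j + 1))\<^sup>2) has_integral 1 / (24 * m)) {?c..?b}"
      using has_integral_affine_square[OF m cb, of "j + 1"] m by (simp add: field_simps power3_eq_cube)
    show "g integrable_on {?c..?b}" by (rule g_int) (use m in simp)
    fix x assume "x \<in> {?c..?b}"
    then have "j + 1/2 \<le> x * m" "x * m \<le> real j + 1" using m by (auto simp: field_simps)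
    from sq_dist_Ints_lower'[OF assms(3)[of x] Ints_of_nat this]
    show "(m * x - (j + 1))\<^sup>2 \<le> g x"
      by (simp add: g_def mult.commute add.commute)
  qed
  have "integral {?a..?c} g + integral {?c..?b} g = integral {?a..?b} g"
    using ac cb m by (intro Henstock_Kurzweil_Integration.integral_combine g_int) auto
  then show ?thesis
    using left right by (simp add: add.commute)
qed

lemma integral_square_deviation_lower:
  fixes f :: "real \<Rightarrow> real" and m :: nat
  assumes "mono f" "\<And>\<gamma>. 0 \<le> f \<gamma>" "\<And>\<gamma>. f \<gamma> \<in> \<int>" "0 < m"
  shows "1/12 \<le> integral {0..1} (\<lambda>\<gamma>. (f \<gamma> - \<gamma> * real m)\<^sup>2)"
proof -
  define g where "g = (\<lambda>\<gamma>. (f \<gamma> - \<gamma> * real m)\<^sup>2)"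
  have m: "0 < real m" using assms(4) by simp
  have "real j / (12 * m) \<le> integral {0 .. j / m} g" for j :: nat
  proof (induction j)
    case (Suc j)
    have "integral {0 .. j / m} g + integral {j / m .. (j + 1) / m} g = integral {0 .. (j + 1) / m} g"
      using m unfolding g_def
      by (intro Henstock_Kurzweil_Integration.integral_combine integrable_square_deviation assms)
         (auto simp: divide_right_mono)
    moreover have "real (Suc j) / (12 * m) = real j / (12 * m) + 1 / (12 * m)"
      by (simp add: add_divide_distrib)
    ultimately show ?case
      using Suc.IH integral_square_deviation_cell[OF assms, of j] by (simp add: g_def add.commute)
  qed simp
  from this[of m] show ?thesis
    using m by (simp add: g_def)
qed

theorem lemma3p3:
  fixes m :: nat and s :: "nat \<Rightarrow> real" and \<alpha> :: real
  assumes "m \<ge> 1" and "\<alpha> \<in> {0..1}"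
  shows "integral {0..1} (\<lambda>\<gamma>. (Ncount m s \<alpha> \<gamma> - \<gamma> * real m)\<^sup>2) \<ge> 1/12"
  using integral_square_deviation_lower[OF mono_Ncount Ncount_nonneg Ncount_Ints] assms(1)
  by simp

end
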